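(* Let $S_0=\sum_{k=0}^\infty \frac{1}{(3k+1)(k+1)}=\frac{\pi\sqrt3}{12}+\frac34\log 3$. Then \begin{align*} &\sum_{n=0}^\infty \frac{9n+7}{(n+1)(3n+1)}\,\frac{(\frac53)_n}{(\frac32)_n}\,\frac{1}{4^n}=6S_0,\\ &\sum_{n=0}^\infty \frac{9n+5}{n+1}\,\frac{(\frac13)_n^2}{(\frac53)_n(\frac76)_n}\,\frac{1}{4^n}=4S_0,\\ &\sum_{n=0}^\infty (189n^2+222n+61)\,\frac{(\frac13)_n^2(1)_n}{(\frac76)_n(\frac32)_n^2}\,\frac{1}{64^n}=48S_0,\\ &\sum_{n=0}^\infty \frac{30n^2+35n+11}{(1+2n)(1+n)}\,\frac{(\frac13)_n}{(\frac76)_n}\,\frac{1}{(-4)^n}=8S_0,\\ &\sum_{n=0}^\infty \frac{90n^2+111n+31}{(1+6n)(2+3n)(1+n)}\,\frac{(\frac13)_n}{(\frac32)_n}\,\frac{1}{(-4)^n}=12S_0. \end{align*}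
   Context: $(x)_n=\Gamma(x+n)/\Gamma(x)=x(x+1)\cdots(x+n-1)$ denotes the rising factorial (Pochhammer symbol). *)

theory Defs
  imports Complex_Main
begin

end

theory Submission
  imports Defs "HOL-Real_Asymp.Real_Asymp"
begin

(*
  With F0 k = 1/((3k+1)(k+1)) = 3/2 (1/(3k+1) - 1/(3k+3)), the series S0 is 3/2 times the
  integral over [0,1] of (1 + t)/(1 + t + t^2) = (1 - t^2)/(1 - t^3).  As functions of t, the
  partial sums sum_{k<N} (t^(3k+1)/(3k+1) - t^(3k+3)/(3k+3)) have derivative
  (1 + t)(1 - t^(3N))/(1 + t + t^2); comparing with the primitive
  ln(1 + t + t^2)/2 + arctan((2t+1)/sqrt 3)/sqrt 3 bounds the error of the N-th partial sum
  by 1/(3N+1), and 3/2 times the increment of the primitive over [0,1] is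
  pi sqrt 3/12 + 3/4 ln 3.

  Each of the other five series comes from a WZ pair: F(n,k) is hypergeometric in n and k
  with F(0,k) = F0 k, G = R F for a rational certificate R, and
  F(n,k) - F(n+1,k) = G(n,k) - G(n,k+1).  Summing over k (G(n,k) -> 0 as k -> oo) gives
  sum_k F(n,k) - sum_k F(n+1,k) = G(n,0); the n-ratio of F is bounded by some q < 1, so
  sum_k F(n,k) -> 0 and sum_n G(n,0) = sum_k F(0,k) = S0.  Finally c G(n,0) is the n-th term
  of the series, for the appropriate constant c.
*)

section \<open>The value of S0\<close>

definition S0_primitive :: "real \<Rightarrow> real" where
  "S0_primitive t = ln (1 + t + t\<^sup>2) / 2 + arctan ((2 * t + 1) / sqrt 3) / sqrt 3"

definition S0_partial :: "nat \<Rightarrow> real \<Rightarrow> real" where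
  "S0_partial N t =
    (\<Sum>k::nat<N. t ^ (3 * k + 1) / real (3 * k + 1) - t ^ (3 * k + 3) / real (3 * k + 3))"

lemma trinomial_pos: "0 < 1 + t + t\<^sup>2" for t :: real
proof -
  have "0 \<le> (t + 1 / 2)\<^sup>2" by simp
  then show ?thesis by (simp add: power2_eq_square algebra_simps)
qed

lemma S0_primitive_deriv: "(S0_primitive has_real_derivative (1 + t) / (1 + t + t\<^sup>2)) (at t)"
proof -
  have Q: "0 < 1 + t + t\<^sup>2" by (rule trinomial_pos)
  have ln: "((\<lambda>t. ln (1 + t + t\<^sup>2) / 2) has_real_derivative
      (1 + 2 * t) / (1 + t + t\<^sup>2) / 2) (at t)"
    using Q by (auto intro!: derivative_eq_intros simp: field_simps)
  have arctan: "((\<lambda>t. arctan ((2 * t + 1) / sqrt 3) / sqrt 3) has_real_derivative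
      inverse (1 + ((2 * t + 1) / sqrt 3)\<^sup>2) * (2 / sqrt 3) / sqrt 3) (at t)"
    by (auto intro!: derivative_eq_intros)
  have "inverse (1 + ((2 * t + 1) / sqrt 3)\<^sup>2) * (2 / sqrt 3) / sqrt 3
      = 2 / (3 * (1 + ((2 * t + 1) / sqrt 3)\<^sup>2))"
    by (simp add: field_simps)
  also have "3 * (1 + ((2 * t + 1) / sqrt 3)\<^sup>2) = 4 * (1 + t + t\<^sup>2)"
    by (simp add: power_divide power2_eq_square algebra_simps)
  finally have arctan_value: "inverse (1 + ((2 * t + 1) / sqrt 3)\<^sup>2) * (2 / sqrt 3) / sqrt 3
      = 2 / (4 * (1 + t + t\<^sup>2))" .
  have "(1 + 2 * t) / (1 + t + t\<^sup>2) / 2 + 2 / (4 * (1 + t + t\<^sup>2))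
      = (1 + t) / (1 + t + t\<^sup>2)"
    using Q by (simp add: field_simps)
  then show ?thesis
    unfolding S0_primitive_def[abs_def] arctan_value[symmetric]
    by (rule DERIV_cong[OF DERIV_add[OF ln arctan]])
qed

lemma sum_diff_powers_mult_trinomial:
  "(\<Sum>k<N. t ^ (3 * k) - t ^ (3 * k + 2)) * (1 + t + t\<^sup>2) = (1 + t) * (1 - t ^ (3 * N))"
  for t :: real
proof (induction N)
  case (Suc N)
  then show ?case
    by (simp add: algebra_simps power_add power2_eq_square power3_eq_cube)
qed simp

lemma DERIV_power_div_exponent:
  "n \<noteq> 0 \<Longrightarrow> ((\<lambda>t. t ^ n / real n) has_real_derivative t ^ (n - 1)) (at t)"
  by (auto intro!: derivative_eq_intros)

lemma S0_partial_deriv: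
  fixes t :: real
  shows "(S0_partial N has_real_derivative (1 + t) * (1 - t ^ (3 * N)) / (1 + t + t\<^sup>2)) (at t)"
proof -
  have "((\<lambda>t. t ^ (3 * k + 1) / real (3 * k + 1) - t ^ (3 * k + 3) / real (3 * k + 3))
      has_real_derivative t ^ (3 * k) - t ^ (3 * k + 2)) (at t)" for k
    using DERIV_diff[OF DERIV_power_div_exponent[of "3 * k + 1"] DERIV_power_div_exponent[of "3 * k + 3"]]
    by simp
  then have "(S0_partial N has_real_derivative (\<Sum>k<N. t ^ (3 * k) - t ^ (3 * k + 2))) (at t)"
    unfolding S0_partial_def by (rule DERIV_sum)
  moreover have "1 + t + t\<^sup>2 \<noteq> 0"
    using trinomial_pos[of t] by simp
  then have "(\<Sum>k<N. t ^ (3 * k) - t ^ (3 * k + 2)) = (1 + t) * (1 - t ^ (3 * N)) / (1 + t + t\<^sup>2)"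
    using sum_diff_powers_mult_trinomial[of t N] by (simp add: eq_divide_eq)
  ultimately show ?thesis
    by simp
qed

lemma DERIV_increment_bounds:
  fixes f g :: "real \<Rightarrow> real"
  assumes "a \<le> b"
    and f: "\<And>t. a \<le> t \<Longrightarrow> t \<le> b \<Longrightarrow> (f has_real_derivative f' t) (at t)"
    and g: "\<And>t. a \<le> t \<Longrightarrow> t \<le> b \<Longrightarrow> (g has_real_derivative g' t) (at t)"
    and f'_nonneg: "\<And>t. a \<le> t \<Longrightarrow> t \<le> b \<Longrightarrow> 0 \<le> f' t"
    and f'_le_g': "\<And>t. a \<le> t \<Longrightarrow> t \<le> b \<Longrightarrow> f' t \<le> g' t"
  shows "0 \<le> f b - f a" and "f b - f a \<le> g b - g a"
proof -
  have "f a \<le> f b"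
    using \<open>a \<le> b\<close> by (rule DERIV_nonneg_imp_nondecreasing) (use f f'_nonneg in blast)
  then show "0 \<le> f b - f a" by simp
  have "(\<lambda>t. g t - f t) a \<le> (\<lambda>t. g t - f t) b"
    using \<open>a \<le> b\<close>
    by (rule DERIV_nonneg_imp_nondecreasing) (use DERIV_diff[OF g f] f'_le_g' in force)
  then show "f b - f a \<le> g b - g a" by simp
qed

lemma S0_partial_error:
  "0 \<le> S0_primitive 1 - S0_primitive 0 - S0_partial N 1"
  "S0_primitive 1 - S0_primitive 0 - S0_partial N 1 \<le> 1 / (3 * real N + 1)"
proof -
  define E where "E t = S0_primitive t - S0_partial N t" for t
  define E' where "E' t = (1 + t) * t ^ (3 * N) / (1 + t + t\<^sup>2)" for t :: real
  define B where "B t = t ^ (3 * N + 1) / real (3 * N + 1)" for t :: real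
  have E: "(E has_real_derivative E' t) (at t)" for t
  proof -
    have "(1 + t) / (1 + t + t\<^sup>2) - (1 + t) * (1 - t ^ (3 * N)) / (1 + t + t\<^sup>2) = E' t"
      unfolding E'_def by (simp add: diff_divide_distrib[symmetric] algebra_simps)
    then show ?thesis
      unfolding E_def[abs_def]
      by (rule DERIV_cong[OF DERIV_diff[OF S0_primitive_deriv S0_partial_deriv]])
  qed
  have B: "(B has_real_derivative t ^ (3 * N)) (at t)" for t
    unfolding B_def[abs_def] using DERIV_power_div_exponent[of "3 * N + 1" t] by simp
  have E'_bounds: "0 \<le> E' t \<and> E' t \<le> t ^ (3 * N)" if "0 \<le> t" for t
  proof -
    have "(1 + t) * t ^ (3 * N) \<le> (1 + t + t\<^sup>2) * t ^ (3 * N)"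
      using that by (intro mult_right_mono) simp_all
    then show ?thesis
      unfolding E'_def using that trinomial_pos[of t] by (simp add: divide_le_eq mult.commute)
  qed
  have "0 \<le> E 1 - E 0" "E 1 - E 0 \<le> B 1 - B 0"
    by (rule DERIV_increment_bounds[of 0 1 E E' B "\<lambda>t. t ^ (3 * N)"]; use E B E'_bounds in simp)+
  moreover have "S0_partial N 0 = 0"
    by (simp add: S0_partial_def power_0_left)
  ultimately show "0 \<le> S0_primitive 1 - S0_primitive 0 - S0_partial N 1"
    and "S0_primitive 1 - S0_primitive 0 - S0_partial N 1 \<le> 1 / (3 * real N + 1)"
    by (simp_all add: E_def B_def algebra_simps)
qed

lemma S0_partial_tendsto: "(\<lambda>N. S0_partial N 1) \<longlonglongrightarrow> S0_primitive 1 - S0_primitive 0"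
proof (rule real_tendsto_sandwich)
  have "(\<lambda>N. 1 / (3 * real N + 1)) \<longlonglongrightarrow> 0"
    by real_asymp
  then show "(\<lambda>N. S0_primitive 1 - S0_primitive 0 - 1 / (3 * real N + 1))
      \<longlonglongrightarrow> S0_primitive 1 - S0_primitive 0"
    using tendsto_diff[OF tendsto_const] by fastforce
qed (use S0_partial_error in \<open>auto simp: algebra_simps\<close>)

lemma S0_primitive_increment:
  "3 / 2 * (S0_primitive 1 - S0_primitive 0) = pi * sqrt 3 / 12 + 3 / 4 * ln 3"
proof -
  have arctan_sqrt_3: "arctan (sqrt 3) = pi / 3"
    using arctan_tan[of "pi / 3"] tan_60 by simp
  have arctan_inverse_sqrt_3: "arctan (1 / sqrt 3) = pi / 6"
    using arctan_tan[of "pi / 6"] tan_30 by simp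
  have "S0_primitive 1 = ln 3 / 2 + pi / 3 / sqrt 3"
    by (simp add: S0_primitive_def real_div_sqrt arctan_sqrt_3)
  moreover have "S0_primitive 0 = pi / 6 / sqrt 3"
    by (simp add: S0_primitive_def arctan_inverse_sqrt_3)
  moreover have
    "ln 3 / 2 + pi / 3 / sqrt 3 - pi / 6 / sqrt 3 = 2 / 3 * (pi * sqrt 3 / 12 + 3 / 4 * ln 3)"
    by (simp add: field_simps)
  ultimately show ?thesis
    by simp
qed

lemma S0_sums:
  "(\<lambda>k. 1 / ((3 * real k + 1) * (real k + 1))) sums (pi * sqrt 3 / 12 + 3 / 4 * ln 3)"
proof -
  have "(\<lambda>k. 3 / 2 * (1 / real (3 * k + 1) - 1 / real (3 * k + 3)))
      sums (3 / 2 * (S0_primitive 1 - S0_primitive 0))"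
    by (rule sums_mult) (use S0_partial_tendsto in \<open>simp add: sums_def S0_partial_def\<close>)
  moreover have
    "3 / 2 * (1 / real (3 * k + 1) - 1 / real (3 * k + 3)) = 1 / ((3 * real k + 1) * (real k + 1))"
    for k
    by (simp add: divide_simps) (simp add: algebra_simps)
  ultimately show ?thesis
    unfolding S0_primitive_increment by simp
qed

section \<open>WZ pairs\<close>

lemma wz_telescoping_sums:
  fixes F G :: "nat \<Rightarrow> nat \<Rightarrow> real"
  assumes wz: "\<And>n k. F n k - F (Suc n) k = G n k - G n (Suc k)"
    and G_tendsto: "\<And>n. (\<lambda>k. G n k) \<longlonglongrightarrow> 0"
    and summable_F: "\<And>n. summable (F n)"
    and suminf_F_tendsto: "(\<lambda>n. suminf (F n)) \<longlonglongrightarrow> 0"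
  shows "(\<lambda>n. G n 0) sums suminf (F 0)"
proof -
  have "(\<lambda>k. F n k - F (Suc n) k) sums (G n 0)" for n
    unfolding wz using telescope_sums'[OF G_tendsto] by simp
  moreover have "(\<lambda>k. F n k - F (Suc n) k) sums (suminf (F n) - suminf (F (Suc n)))" for n
    using summable_F by (intro sums_diff summable_sums)
  ultimately have "suminf (F n) - suminf (F (Suc n)) = G n 0" for n
    using sums_unique2 by blast
  with telescope_sums'[OF suminf_F_tendsto] show ?thesis
    by simp
qed

lemma suminf_tendsto_0_of_geometric_bound:
  fixes F :: "nat \<Rightarrow> nat \<Rightarrow> real"
  assumes bound: "\<And>n k. \<bar>F n k\<bar> \<le> q ^ n * f k"
    and "summable f" and "0 \<le> q" "q < 1"
  shows "(\<lambda>n. suminf (F n)) \<longlonglongrightarrow> 0"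
proof (rule tendsto_0_le[where K = 1])
  show "(\<lambda>n. q ^ n * suminf f) \<longlonglongrightarrow> 0"
    using assms(3,4) by (intro tendsto_mult_left_zero LIMSEQ_power_zero) simp
  have "\<bar>suminf (F n)\<bar> \<le> q ^ n * suminf f" for n
  proof -
    have summable: "summable (\<lambda>k. q ^ n * f k)"
      using \<open>summable f\<close> by (rule summable_mult)
    then have "summable (\<lambda>k. \<bar>F n k\<bar>)"
      by (rule summable_comparison_test') (simp add: bound)
    then have "\<bar>suminf (F n)\<bar> \<le> (\<Sum>k. \<bar>F n k\<bar>)"
      by (rule summable_rabs)
    also have "\<dots> \<le> (\<Sum>k. q ^ n * f k)"
      using bound summable \<open>summable (\<lambda>k. \<bar>F n k\<bar>)\<close> by (intro suminf_le) auto
    finally show ?thesis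
      using \<open>summable f\<close> by (simp add: suminf_mult)
  qed
  then show "\<forall>\<^sub>F n in sequentially. norm (suminf (F n)) \<le> norm (q ^ n * suminf f) * 1"
    by (intro always_eventually allI) (auto intro: order_trans[OF _ abs_ge_self])
qed

(* a x y and b x y stand for the ratios F(x+1,y)/F(x,y) and F(x,y+1)/F(x,y) of the term F
   defined below, ratio_compat makes them consistent, and R is the WZ certificate: G = R F. *)
locale wz_pair =
  fixes F0 :: "nat \<Rightarrow> real" and a b R :: "real \<Rightarrow> real \<Rightarrow> real"
    and q :: real and K :: "real \<Rightarrow> real"
  assumes F0_Suc: "\<And>k. F0 (Suc k) = F0 k * b 0 (real k)"
    and summable_abs_F0: "summable (\<lambda>k. \<bar>F0 k\<bar>)"
    and F0_decay: "(\<lambda>k. (real k + 1) * F0 k) \<longlonglongrightarrow> 0"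
    and wz_equation: "\<And>x y. 0 \<le> x \<Longrightarrow> 0 \<le> y \<Longrightarrow> 1 - a x y = R x y - b x y * R x (y + 1)"
    and ratio_compat:
      "\<And>x y. 0 \<le> x \<Longrightarrow> 0 \<le> y \<Longrightarrow> b x y * a x (y + 1) = a x y * b (x + 1) y"
    and abs_a_le: "\<And>x y. 0 \<le> x \<Longrightarrow> 0 \<le> y \<Longrightarrow> \<bar>a x y\<bar> \<le> q"
    and q_less_1: "q < 1"
    and abs_R_le: "\<And>x y. 0 \<le> x \<Longrightarrow> 0 \<le> y \<Longrightarrow> \<bar>R x y\<bar> \<le> K x * (y + 1)"
begin

definition F :: "nat \<Rightarrow> nat \<Rightarrow> real" where
  "F n k = F0 k * (\<Prod>i<n. a (real i) (real k))"

definition G :: "nat \<Rightarrow> nat \<Rightarrow> real" where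
  "G n k = F n k * R (real n) (real k)"

lemma F_Suc_left: "F (Suc n) k = F n k * a (real n) (real k)"
  by (simp add: F_def)

lemma F_Suc_right: "F n (Suc k) = F n k * b (real n) (real k)"
proof (induction n)
  case 0
  show ?case by (simp add: F_def F0_Suc)
next
  case (Suc n)
  have "F (Suc n) (Suc k) = F n k * (b (real n) (real k) * a (real n) (real k + 1))"
    using Suc.IH by (simp add: F_Suc_left ac_simps)
  also have "b (real n) (real k) * a (real n) (real k + 1)
      = a (real n) (real k) * b (real n + 1) (real k)"
    by (rule ratio_compat) simp_all
  finally show ?case
    by (simp add: F_Suc_left ac_simps)
qed

lemma F_wz: "F n k - F (Suc n) k = G n k - G n (Suc k)"
proof -
  have "F n k - F (Suc n) k = F n k * (1 - a (real n) (real k))"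
    by (simp add: F_Suc_left algebra_simps)
  also have "\<dots> = F n k * (R (real n) (real k) - b (real n) (real k) * R (real n) (real k + 1))"
    by (simp add: wz_equation)
  finally show ?thesis
    by (simp add: G_def F_Suc_right algebra_simps)
qed

lemma abs_F_le: "\<bar>F n k\<bar> \<le> q ^ n * \<bar>F0 k\<bar>"
proof (induction n)
  case (Suc n)
  have "\<bar>F (Suc n) k\<bar> = \<bar>F n k\<bar> * \<bar>a (real n) (real k)\<bar>"
    by (simp add: F_Suc_left abs_mult)
  also have "\<dots> \<le> q ^ n * \<bar>F0 k\<bar> * q"
    using Suc.IH abs_a_le by (intro mult_mono) simp_all
  finally show ?case
    by (simp add: algebra_simps)
qed (simp add: F_def)

lemma q_nonneg: "0 \<le> q"
  using abs_a_le[of 0 0] by simp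

lemma abs_F_le_abs_F0: "\<bar>F n k\<bar> \<le> \<bar>F0 k\<bar>"
proof -
  have "q ^ n \<le> 1"
    using q_nonneg q_less_1 by (simp add: power_le_one)
  then show ?thesis
    using abs_F_le[of n k] q_nonneg
    by (meson abs_ge_zero mult_left_le_one_le order_trans zero_le_power)
qed

lemma G_tendsto_0: "(\<lambda>k. G n k) \<longlonglongrightarrow> 0"
proof (rule tendsto_0_le[OF F0_decay, where K = "K (real n)"], rule always_eventually, rule allI)
  fix k
  have "\<bar>R (real n) (real k)\<bar> \<le> K (real n) * (real k + 1)"
    by (rule abs_R_le) simp_all
  then have "\<bar>F n k\<bar> * \<bar>R (real n) (real k)\<bar> \<le> \<bar>F0 k\<bar> * (K (real n) * (real k + 1))"
    using abs_F_le_abs_F0 by (intro mult_mono) simp_all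
  moreover have "\<bar>F0 k\<bar> * (K (real n) * (real k + 1)) = norm ((real k + 1) * F0 k) * K (real n)"
    by (simp add: abs_mult abs_of_nonneg[of "real k + 1"])
  ultimately show "norm (G n k) \<le> norm ((real k + 1) * F0 k) * K (real n)"
    by (simp add: G_def abs_mult)
qed

theorem sums_G_0: "(\<lambda>n. G n 0) sums suminf F0"
proof -
  have "summable (F n)" for n
    by (rule summable_comparison_test'[OF summable_abs_F0]) (simp add: abs_F_le_abs_F0)
  moreover have "(\<lambda>n. suminf (F n)) \<longlonglongrightarrow> 0"
    using abs_F_le summable_abs_F0 q_nonneg q_less_1 by (rule suminf_tendsto_0_of_geometric_bound)
  ultimately have "(\<lambda>n. G n 0) sums suminf (F 0)"
    using F_wz G_tendsto_0 by (intro wz_telescoping_sums)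
  moreover have "F 0 = F0"
    by (simp add: fun_eq_iff F_def)
  ultimately show ?thesis
    by simp
qed

(* ph (real n) * P n is a closed form of c F(n,0), with ph rational and P hypergeometric of
   ratio s. *)
lemma sums_closed_form:
  assumes "F0 0 = 1" and "ph 0 = c"
    and ph_a: "\<And>n. ph (real n) * a (real n) 0 = ph (real (Suc n)) * s n"
    and ph_R: "\<And>n. ph (real n) * R (real n) 0 = r n"
    and P_Suc: "\<And>n. P (Suc n) = P n * s n" and "P 0 = 1"
  shows "(\<lambda>n. r n * P n) sums (c * suminf F0)"
proof -
  have ph_F: "c * F n 0 = ph (real n) * P n" for n
  proof (induction n)
    case 0
    show ?case using assms(1,2,6) by (simp add: F_def)
  next
    case (Suc n)
    have "c * F (Suc n) 0 = P n * (ph (real n) * a (real n) 0)"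
      using Suc.IH by (simp add: F_Suc_left ac_simps)
    also have "\<dots> = ph (real (Suc n)) * P (Suc n)"
      by (simp add: ph_a P_Suc ac_simps)
    finally show ?case .
  qed
  have "c * G n 0 = P n * (ph (real n) * R (real n) 0)" for n
    by (simp add: G_def ph_F mult.commute mult.left_commute)
  then have "r n * P n = c * G n 0" for n
    by (simp add: ph_R)
  then show ?thesis
    using sums_mult[OF sums_G_0, of c] by simp
qed

end

section \<open>The five series\<close>

lemma summable_abs_S0_term: "summable (\<lambda>k. \<bar>1 / ((3 * real k + 1) * (real k + 1))\<bar>)"
  using sums_summable[OF S0_sums] by simp

lemma S0_term_decay:
  "(\<lambda>k. (real k + 1) * (1 / ((3 * real k + 1) * (real k + 1)))) \<longlonglongrightarrow> 0"
  by real_asymp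

lemma abs_divide_le_of_le_mult: "0 \<le> u \<Longrightarrow> u \<le> q * v \<Longrightarrow> 0 < v \<Longrightarrow> \<bar>u / v\<bar> \<le> q"
  for u v q :: real
  by (simp add: divide_le_eq)

lemma abs_mult_divide_mult_le:
  fixes u v w z q :: real
  assumes "\<bar>u / v\<bar> \<le> q" "0 \<le> w" "w \<le> z" "0 < z"
  shows "\<bar>u * w / (v * z)\<bar> \<le> q"
proof -
  have "\<bar>u * w / (v * z)\<bar> = \<bar>u / v\<bar> * (w / z)"
    using assms(2,4) by (simp add: abs_mult)
  also have "\<dots> \<le> q * 1"
    using assms order_trans[OF abs_ge_zero assms(1)] by (intro mult_mono) simp_all
  finally show ?thesis by simp
qed

lemma abs_quadratic_divide_le:
  fixes y b c d1 d2 :: real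
  assumes "0 \<le> y" "0 \<le> b" "0 \<le> c" "1 \<le> d1" "y + 1 \<le> d2"
  shows "\<bar>(y\<^sup>2 + b * y + c) / (d1 * d2)\<bar> \<le> (1 + b + c) * (y + 1)"
proof -
  define p where "p = y\<^sup>2 + b * y + c"
  have "(1 + b + c) * (y + 1)\<^sup>2 - p
      = (2 * y + 1) + b * (y * y + y + 1) + c * (y * y + 2 * y)"
    unfolding p_def by (simp add: power2_eq_square algebra_simps)
  also have "0 \<le> \<dots>"
    using assms by (intro add_nonneg_nonneg mult_nonneg_nonneg) auto
  finally have p_le: "p \<le> (1 + b + c) * (y + 1)\<^sup>2" by simp
  have p_nonneg: "0 \<le> p"
    unfolding p_def using assms by simp
  have "1 * (y + 1) \<le> d1 * d2"
    using assms by (intro mult_mono) auto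
  then have "p / (d1 * d2) \<le> p / (y + 1)"
    using assms p_nonneg by (intro divide_left_mono) auto
  also have "\<dots> \<le> (1 + b + c) * (y + 1)\<^sup>2 / (y + 1)"
    using assms p_le by (intro divide_right_mono) auto
  also have "\<dots> = (1 + b + c) * (y + 1)"
    using assms by (simp add: power2_eq_square)
  finally show ?thesis
    using assms p_nonneg \<open>1 * (y + 1) \<le> d1 * d2\<close> unfolding p_def[symmetric] by simp
qed

lemma abs_cubic_divide_le:
  fixes y b c d d1 d2 d3 :: real
  assumes "0 \<le> y" "0 \<le> b" "0 \<le> c" "0 \<le> d" "1 \<le> d1" "y + 1 \<le> d2" "y + 1 \<le> d3"
  shows "\<bar>(y ^ 3 + b * y\<^sup>2 + c * y + d) / (d1 * d2 * d3)\<bar> \<le> (1 + b + c + d) * (y + 1)"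
proof -
  define p where "p = y ^ 3 + b * y\<^sup>2 + c * y + d"
  have "(1 + b + c + d) * (y + 1) ^ 3 - p = (3 * y * y + 3 * y + 1)
      + b * (y * y * y + 2 * y * y + 3 * y + 1) + c * (y * y * y + 3 * y * y + 2 * y + 1)
      + d * (y * y * y + 3 * y * y + 3 * y)"
    unfolding p_def by (simp add: power3_eq_cube power2_eq_square algebra_simps)
  also have "0 \<le> \<dots>"
    using assms by (intro add_nonneg_nonneg mult_nonneg_nonneg) auto
  finally have p_le: "p \<le> (1 + b + c + d) * (y + 1) ^ 3" by simp
  have p_nonneg: "0 \<le> p"
    unfolding p_def using assms by simp
  have den: "1 * (y + 1) * (y + 1) \<le> d1 * d2 * d3"
    using assms by (intro mult_mono) auto
  then have "p / (d1 * d2 * d3) \<le> p / (y + 1)\<^sup>2"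
    using assms p_nonneg by (intro divide_left_mono) (auto simp: power2_eq_square)
  also have "\<dots> \<le> (1 + b + c + d) * (y + 1) ^ 3 / (y + 1)\<^sup>2"
    using assms p_le by (intro divide_right_mono) auto
  also have "\<dots> = (1 + b + c + d) * (y + 1)"
    using assms by (simp add: power2_eq_square power3_eq_cube)
  finally show ?thesis
    using assms p_nonneg den unfolding p_def[symmetric] by simp
qed

lemma pochhammer_pos_neq_0: "0 < x \<Longrightarrow> pochhammer x n \<noteq> (0::real)"
  using pochhammer_pos[of x n] by simp

(* In each interpretation the bound on the n-ratio is proved factor by factor: the first
   numerator factor is at most q times the first denominator factor, each other numerator
   factor is at most the corresponding denominator factor. *)
interpretation series_1: wz_pair
  "\<lambda>k. 1 / ((3 * real k + 1) * (real k + 1))"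
  "\<lambda>x y. (x + 5/3) * (y + x + 1/3) * (y + x + 1)
      / ((y + 2*x + 3) * (y + x + 4/3) * (y + 2*x + 2))"
  "\<lambda>x y. (y + x + 1/3) * (y + x + 1) / ((y + x + 4/3) * (y + 2*x + 2))"
  "\<lambda>x y. (y\<^sup>2 + (3*x + 7/3) * y + (3*x\<^sup>2 + 16/3*x + 7/3))
      / ((x + 1) * (y + 2*x + 2))"
  "5/9" "\<lambda>x. 1 + (3*x + 7/3) + (3*x\<^sup>2 + 16/3*x + 7/3)"
proof (unfold_locales, goal_cases)
  case 1
  show ?case by (simp add: divide_simps; algebra)
next
  case 2
  show ?case by (rule summable_abs_S0_term)
next
  case 3
  show ?case by (rule S0_term_decay)
next
  case 4
  then show ?case by (simp add: divide_simps; algebra)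
next
  case 5
  then show ?case by (simp add: divide_simps; algebra)
next
  case 6
  show ?case
    by (intro abs_mult_divide_mult_le abs_divide_le_of_le_mult) (use 6 in \<open>simp_all add: ring_distribs\<close>)
next
  case 7
  show ?case by simp
next
  case 8
  show ?case
    by (rule abs_quadratic_divide_le) (use 8 in \<open>simp_all add: add_nonneg_nonneg\<close>)
qed

lemma sums_series_1:
  "(\<lambda>n. (9 * real n + 7) / ((real n + 1) * (3 * real n + 1))
      * pochhammer (5/3) n / pochhammer (3/2) n / 4 ^ n)
    sums (6 * (\<Sum>k. 1 / ((3 * real k + 1) * (real k + 1))))"
  unfolding times_divide_eq_right[symmetric]
proof (rule series_1.sums_closed_form
    [where ph = "\<lambda>x. 6 / (3 * x + 1)"
      and s = "\<lambda>n. (real n + 5/3) / ((real n + 3/2) * 4)"], goal_cases)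
  case 3
  show ?case by (simp add: divide_simps; algebra)
next
  case 4
  show ?case by (simp add: divide_simps; algebra)
next
  case 5
  show ?case by (simp add: pochhammer_rec' pochhammer_pos_neq_0 divide_simps; algebra)
qed simp_all

interpretation series_2: wz_pair
  "\<lambda>k. 1 / ((3 * real k + 1) * (real k + 1))"
  "\<lambda>x y. (x + 1/3) * (y + x + 1/3) * (y + x + 1)
      / ((y + 2*x + 7/3) * (y + 2*x + 4/3) * (y + x + 2))"
  "\<lambda>x y. (y + x + 1/3) * (y + x + 1) / ((y + 2*x + 4/3) * (y + x + 2))"
  "\<lambda>x y. (y\<^sup>2 + (3*x + 7/3) * y + (3*x\<^sup>2 + 14/3*x + 5/3))
      / ((x + 1) * (y + 2*x + 4/3))"
  "1/2" "\<lambda>x. 1 + (3*x + 7/3) + (3*x\<^sup>2 + 14/3*x + 5/3)"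
proof (unfold_locales, goal_cases)
  case 1
  show ?case by (simp add: divide_simps; algebra)
next
  case 2
  show ?case by (rule summable_abs_S0_term)
next
  case 3
  show ?case by (rule S0_term_decay)
next
  case 4
  then show ?case by (simp add: divide_simps; algebra)
next
  case 5
  then show ?case by (simp add: divide_simps; algebra)
next
  case 6
  show ?case
    by (intro abs_mult_divide_mult_le abs_divide_le_of_le_mult) (use 6 in \<open>simp_all add: ring_distribs\<close>)
next
  case 7
  show ?case by simp
next
  case 8
  show ?case
    by (rule abs_quadratic_divide_le) (use 8 in \<open>simp_all add: add_nonneg_nonneg\<close>)
qed

lemma sums_series_2:
  "(\<lambda>n. (9 * real n + 5) / (real n + 1)
      * pochhammer (1/3) n ^ 2 / (pochhammer (5/3) n * pochhammer (7/6) n) / 4 ^ n)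
    sums (4 * (\<Sum>k. 1 / ((3 * real k + 1) * (real k + 1))))"
  unfolding times_divide_eq_right[symmetric]
proof (rule series_2.sums_closed_form
    [where ph = "\<lambda>x. (6 * x + 4) / (x + 1)"
      and s = "\<lambda>n. (real n + 1/3)\<^sup>2 / ((real n + 5/3) * (real n + 7/6) * 4)"], goal_cases)
  case 3
  show ?case by (simp add: divide_simps; algebra)
next
  case 4
  show ?case by (simp add: divide_simps; algebra)
next
  case 5
  show ?case by (simp add: pochhammer_rec' pochhammer_pos_neq_0 divide_simps; algebra)
qed simp_all

interpretation series_3: wz_pair
  "\<lambda>k. 1 / ((3 * real k + 1) * (real k + 1))"
  "\<lambda>x y. (x + 5/3) * (x + 1) * (x + 1/3) * (y + x + 1/3) * (y + x + 1)
      / (4 * (x + 1/2) * (y + 2*x + 3) * (y + 2*x + 7/3) * (y + 2*x + 4/3) * (y + 2*x + 2))"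
  "\<lambda>x y. (y + x + 1/3) * (y + x + 1) / ((y + 2*x + 4/3) * (y + 2*x + 2))"
  "\<lambda>x y. (y ^ 3 + (13/2*x + 9/2) * y\<^sup>2 + (14*x\<^sup>2 + 59/3*x + 59/9) * y + (21/2*x ^ 3 + 137/6*x\<^sup>2 + 283/18*x + 61/18))
      / ((2*x + 1) * (y + 2*x + 4/3) * (y + 2*x + 2))"
  "5/6" "\<lambda>x. 1 + (13/2*x + 9/2) + (14*x\<^sup>2 + 59/3*x + 59/9) + (21/2*x ^ 3 + 137/6*x\<^sup>2 + 283/18*x + 61/18)"
proof (unfold_locales, goal_cases)
  case 1
  show ?case by (simp add: divide_simps; algebra)
next
  case 2
  show ?case by (rule summable_abs_S0_term)
next
  case 3
  show ?case by (rule S0_term_decay)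
next
  case 4
  then show ?case by (simp add: divide_simps; algebra)
next
  case 5
  then show ?case by (simp add: divide_simps; algebra)
next
  case 6
  show ?case
    by (intro abs_mult_divide_mult_le abs_divide_le_of_le_mult) (use 6 in \<open>simp_all add: ring_distribs\<close>)
next
  case 7
  show ?case by simp
next
  case 8
  show ?case
    by (rule abs_cubic_divide_le) (use 8 in \<open>simp_all add: add_nonneg_nonneg\<close>)
qed

lemma sums_series_3:
  "(\<lambda>n. (189 * real n ^ 2 + 222 * real n + 61) * (pochhammer (1/3) n ^ 2
      * pochhammer 1 n) / (pochhammer (7/6) n * pochhammer (3/2) n ^ 2) / 64 ^ n)
    sums (48 * (\<Sum>k. 1 / ((3 * real k + 1) * (real k + 1))))"
  unfolding times_divide_eq_right[symmetric]
proof (rule series_3.sums_closed_form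
    [where ph = "\<lambda>x. 24 * (3 * x + 2) * (2 * x + 1)"
      and s = "\<lambda>n. (real n + 1/3)\<^sup>2 * (real n + 1) / ((real n + 7/6) * (real n + 3/2)\<^sup>2 * 64)"], goal_cases)
  case 3
  show ?case by (simp add: divide_simps; algebra)
next
  case 4
  show ?case by (simp add: divide_simps; algebra)
next
  case 5
  show ?case by (simp add: pochhammer_rec' pochhammer_pos_neq_0 divide_simps; algebra)
qed simp_all

interpretation series_4: wz_pair
  "\<lambda>k. 1 / ((3 * real k + 1) * (real k + 1))"
  "\<lambda>x y. - ((x + 5/3) * (y + x + 1/3) * (y + 2*x + 1))
      / ((y + 2*x + 7/3) * (y + 2*x + 4/3) * (y + 2*x + 3))"
  "\<lambda>x y. (y + x + 1/3) * (y + 2*x + 1) / ((y + 2*x + 4/3) * (y + 2*x + 2))"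
  "\<lambda>x y. (y ^ 3 + (7*x + 16/3) * y\<^sup>2 + (15*x\<^sup>2 + 22*x + 23/3) * y + (10*x ^ 3 + 65/3*x\<^sup>2 + 46/3*x + 11/3))
      / ((x + 1) * (y + 2*x + 4/3) * (y + 2*x + 2))"
  "5/7" "\<lambda>x. 1 + (7*x + 16/3) + (15*x\<^sup>2 + 22*x + 23/3) + (10*x ^ 3 + 65/3*x\<^sup>2 + 46/3*x + 11/3)"
proof (unfold_locales, goal_cases)
  case 1
  show ?case by (simp add: divide_simps; algebra)
next
  case 2
  show ?case by (rule summable_abs_S0_term)
next
  case 3
  show ?case by (rule S0_term_decay)
next
  case 4
  then show ?case by (simp add: divide_simps; algebra)
next
  case 5
  then show ?case by (simp add: divide_simps; algebra)
next
  case 6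
  show ?case
    unfolding minus_divide_left[symmetric] abs_minus_cancel
    by (intro abs_mult_divide_mult_le abs_divide_le_of_le_mult) (use 6 in \<open>simp_all add: ring_distribs\<close>)
next
  case 7
  show ?case by simp
next
  case 8
  show ?case
    by (rule abs_cubic_divide_le) (use 8 in \<open>simp_all add: add_nonneg_nonneg\<close>)
qed

lemma sums_series_4:
  "(\<lambda>n. (30 * real n ^ 2 + 35 * real n + 11) / ((1 + 2 * real n) * (1 + real n))
      * pochhammer (1/3) n / pochhammer (7/6) n / (-4) ^ n)
    sums (8 * (\<Sum>k. 1 / ((3 * real k + 1) * (real k + 1))))"
  unfolding times_divide_eq_right[symmetric]
proof (rule series_4.sums_closed_form
    [where ph = "\<lambda>x. (12 * x + 8) / (2 * x + 1)"
      and s = "\<lambda>n. - (real n + 1/3) / ((real n + 7/6) * 4)"], goal_cases)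
  case 3
  show ?case by (simp add: divide_simps; algebra)
next
  case 4
  show ?case by (simp add: divide_simps; algebra)
next
  case 5
  show ?case by (simp add: pochhammer_rec' pochhammer_pos_neq_0 divide_simps; algebra)
qed simp_all

interpretation series_5: wz_pair
  "\<lambda>k. 1 / ((3 * real k + 1) * (real k + 1))"
  "\<lambda>x y. - ((x + 1/3) * (y + 2*x + 1/3) * (y + x + 1))
      / ((y + 2*x + 3) * (y + 2*x + 7/3) * (y + 2*x + 2))"
  "\<lambda>x y. (y + 2*x + 1/3) * (y + x + 1) / ((y + 2*x + 4/3) * (y + 2*x + 2))"
  "\<lambda>x y. (y ^ 3 + (7*x + 14/3) * y\<^sup>2 + (15*x\<^sup>2 + 62/3*x + 61/9) * y + (10*x ^ 3 + 67/3*x\<^sup>2 + 142/9*x + 31/9))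
      / ((x + 1) * (y + 2*x + 4/3) * (y + 2*x + 2))"
  "1/2" "\<lambda>x. 1 + (7*x + 14/3) + (15*x\<^sup>2 + 62/3*x + 61/9) + (10*x ^ 3 + 67/3*x\<^sup>2 + 142/9*x + 31/9)"
proof (unfold_locales, goal_cases)
  case 1
  show ?case by (simp add: divide_simps; algebra)
next
  case 2
  show ?case by (rule summable_abs_S0_term)
next
  case 3
  show ?case by (rule S0_term_decay)
next
  case 4
  then show ?case by (simp add: divide_simps; algebra)
next
  case 5
  then show ?case by (simp add: divide_simps; algebra)
next
  case 6
  show ?case
    unfolding minus_divide_left[symmetric] abs_minus_cancel
    by (intro abs_mult_divide_mult_le abs_divide_le_of_le_mult) (use 6 in \<open>simp_all add: ring_distribs\<close>)
next
  case 7
  show ?case by simp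
next
  case 8
  show ?case
    by (rule abs_cubic_divide_le) (use 8 in \<open>simp_all add: add_nonneg_nonneg\<close>)
qed

lemma sums_series_5:
  "(\<lambda>n. (90 * real n ^ 2 + 111 * real n + 31) / ((1 + 6 * real n) * (2 + 3 * real n) * (1 + real n))
      * pochhammer (1/3) n / pochhammer (3/2) n / (-4) ^ n)
    sums (12 * (\<Sum>k. 1 / ((3 * real k + 1) * (real k + 1))))"
  unfolding times_divide_eq_right[symmetric]
proof (rule series_5.sums_closed_form
    [where ph = "\<lambda>x. 12 / (1 + 6 * x)"
      and s = "\<lambda>n. - (real n + 1/3) / ((real n + 3/2) * 4)"], goal_cases)
  case 3
  show ?case by (simp add: divide_simps; algebra)
next
  case 4
  show ?case by (simp add: divide_simps; algebra)
next
  case 5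
  show ?case by (simp add: pochhammer_rec' pochhammer_pos_neq_0 divide_simps; algebra)
qed simp_all

theorem proposition3p1:
  fixes S0 :: real
  defines "S0 \<equiv> pi * sqrt 3 / 12 + 3 / 4 * ln 3"
  shows "(\<lambda>k::nat. 1 / ((3 * real k + 1) * (real k + 1))) sums S0 \<and>
       (\<lambda>n::nat. (9 * real n + 7) / ((real n + 1) * (3 * real n + 1))
            * pochhammer (5/3) n / pochhammer (3/2) n / 4 ^ n) sums (6 * S0) \<and>
       (\<lambda>n::nat. (9 * real n + 5) / (real n + 1)
            * pochhammer (1/3) n ^ 2 / (pochhammer (5/3) n * pochhammer (7/6) n) / 4 ^ n)
           sums (4 * S0) \<and>
       (\<lambda>n::nat. (189 * real n ^ 2 + 222 * real n + 61)
            * (pochhammer (1/3) n ^ 2 * pochhammer 1 n)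
            / (pochhammer (7/6) n * pochhammer (3/2) n ^ 2) / 64 ^ n) sums (48 * S0) \<and>
       (\<lambda>n::nat. (30 * real n ^ 2 + 35 * real n + 11) / ((1 + 2 * real n) * (1 + real n))
            * pochhammer (1/3) n / pochhammer (7/6) n / (-4) ^ n) sums (8 * S0) \<and>
       (\<lambda>n::nat. (90 * real n ^ 2 + 111 * real n + 31)
            / ((1 + 6 * real n) * (2 + 3 * real n) * (1 + real n))
            * pochhammer (1/3) n / pochhammer (3/2) n / (-4) ^ n) sums (12 * S0)"
proof -
  have S0: "(\<Sum>k. 1 / ((3 * real k + 1) * (real k + 1))) = S0"
    using S0_sums unfolding S0_def by (rule sums_unique[symmetric])
  show ?thesis
    using S0_sums sums_series_1 sums_series_2 sums_series_3 sums_series_4 sums_series_5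
    unfolding S0 unfolding S0_def by blast
qed

end
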